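(* Let $q$ be an odd prime power, $c\in\mathbb{F}_q^*$, $f(X)=X(X^{q-1}-c)^{q+1}$ on $\mathbb{F}_{q^2}$, with $a,\beta,g$ as in the context. For $L_{[u:v]}\in\mathbb{P}^1$ we have $g(u,v)=0$ if and only if ($c=1$ and $v=0$) or ($c=-1$ and $u=0$). Moreover, for each $L_{[u:v]}\in\mathbb{P}^1$ with $g(u,v)\neq0$, the set $L_{[u:v]}\setminus\{0\}$ is the union of exactly $\frac{q-1}{d}$ cycles of length $d$ in $\mathcal{G}(f)$, where $d$ is the multiplicative order of $g(u,v)$ in $\mathbb{F}_q^*$.
   Context: $a\in\mathbb{F}_q^*$ is a non-square in $\mathbb{F}_q$, $\beta\in\mathbb{F}_{q^2}$ with $\beta^2=a$; every element of $\mathbb{F}_{q^2}$ is uniquely $x+y\beta$, $x,y\in\mathbb{F}_q$. For $(x,y)\neq(0,0)$, $g(x,y)=\frac{(1-c)^2x^2-(1+c)^2y^2a}{x^2-y^2a}\in\mathbb{F}_q$; it satisfies $g(\lambda x,\lambda y)=g(x,y)$ for $\lambda\in\mathbb{F}_q^*$. For $(u,v)\in\mathbb{F}_q^2\setminus\{(0,0)\}$, $L_{[u:v]}=\{\lambda(u+v\beta):\lambda\in\mathbb{F}_q\}$, and $\mathbb{P}^1$ is the set of these $q+1$ lines ($L_{[u:v]}=L_{[u':v']}$ iff $(u',v')$ is a nonzero scalar multiple of $(u,v)$). $\mathcal{G}(f)$ is the functional graph (vertices $\mathbb{F}_{q^2}$, edges $\langle x,f(x)\rangle$); a cycle of length $n$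 consists of distinct $\alpha,f(\alpha),\dots,f^{(n-1)}(\alpha)$ with $f^{(n)}(\alpha)=\alpha$. *)

theory Defs
  imports "HOL-Computational_Algebra.Primes"
begin

text \<open>The ambient field F_{q^2} is a finite field type 'a with CARD('a) = q^2;
  its subfield F_q is the set of roots of X^q - X.\<close>
definition subfield_q :: "nat \<Rightarrow> 'a::{finite,field} set" where
  "subfield_q q = {x. x ^ q = x}"

definition prime_power :: "nat \<Rightarrow> bool" where
  "prime_power q \<longleftrightarrow> (\<exists>p k. prime p \<and> 0 < k \<and> q = p ^ k)"

definition gfun :: "'a::field \<Rightarrow> 'a \<Rightarrow> 'a \<Rightarrow> 'a \<Rightarrow> 'a" where
  "gfun c a x y = ((1 - c)^2 * x^2 - (1 + c)^2 * y^2 * a) / (x^2 - y^2 * a)"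

definition fmap :: "nat \<Rightarrow> 'a::field \<Rightarrow> 'a \<Rightarrow> 'a" where
  "fmap q c X = X * (X ^ (q - 1) - c) ^ (q + 1)"

definition line :: "nat \<Rightarrow> 'a::{finite,field} \<Rightarrow> 'a \<Rightarrow> 'a \<Rightarrow> 'a set" where
  "line q \<beta> u v = {l * (u + v * \<beta>) | l. l \<in> subfield_q q}"

definition mult_order :: "'a::field \<Rightarrow> nat" where
  "mult_order x = (LEAST n. 0 < n \<and> x ^ n = 1)"

definition is_cycle :: "('a \<Rightarrow> 'a) \<Rightarrow> nat \<Rightarrow> 'a set \<Rightarrow> bool" where
  "is_cycle f n C \<longleftrightarrow> 0 < n \<and> (\<exists>\<alpha>. C = (\<lambda>i. (f ^^ i) \<alpha>) ` {..<n}
      \<and> inj_on (\<lambda>i. (f ^^ i) \<alpha>) {..<n} \<and> (f ^^ n) \<alpha> = \<alpha>)"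

end

theory Submission
  imports Defs "HOL-Number_Theory.Residues"
begin

text \<open>Write \<open>w = u + v\<beta>\<close>. The Frobenius map \<open>x \<mapsto> x\<^sup>q\<close> fixes \<open>\<lambda> \<in> \<bbbF>\<^sub>q\<close> and sends
  \<open>\<beta>\<close> to \<open>-\<beta>\<close>, so for \<open>x = \<lambda>w \<noteq> 0\<close> one gets \<open>x\<^sup>q\<^sup>-\<^sup>1 = w'/w\<close> with the conjugate
  \<open>w' = u - v\<beta>\<close>, and \<open>(x\<^sup>q\<^sup>-\<^sup>1 - c)\<^sup>q\<^sup>+\<^sup>1 = (w/w' - c)(w'/w - c) = g(u,v)\<close>.
  Hence \<open>f\<close> acts on the line \<open>L\<^bsub>[u:v]\<^esub>\<close> as multiplication by \<open>g(u,v) \<in> \<bbbF>\<^sub>q\<close>, whose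
  cycles on the \<open>q - 1\<close> nonzero points are the cosets of the subgroup generated by \<open>g(u,v)\<close>.
  The vanishing of \<open>g\<close> is decided by \<open>a\<close> being a non-square.\<close>

lemma power_card_minus_one_eq_one:
  fixes x :: "'a::{finite,field}"
  assumes "x \<noteq> 0"
  shows "x ^ (card (UNIV :: 'a set) - 1) = 1"
proof -
  let ?N = "UNIV - {0} :: 'a set"
  have "bij_betw ((*) x) ?N ?N"
    by (rule bij_betw_byWitness[where f' = "\<lambda>y. y / x"]) (use assms in auto)
  then have "(\<Prod>y\<in>?N. x * y) = \<Prod>?N"
    by (rule prod.reindex_bij_betw)
  moreover have "(\<Prod>y\<in>?N. x * y) = x ^ card ?N * \<Prod>?N"
    by (simp add: prod.distrib)
  ultimately have "x ^ card ?N * \<Prod>?N = \<Prod>?N"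
    by simp
  moreover have "\<Prod>?N \<noteq> 0"
    by (subst prod_zero_iff) auto
  moreover have "card ?N = card (UNIV :: 'a set) - 1"
    by (rule card_Diff_singleton) simp
  ultimately show ?thesis
    by (metis mult_cancel_right2)
qed

lemma power_card_eq_self:
  fixes x :: "'a::{finite,field}"
  shows "x ^ card (UNIV :: 'a set) = x"
proof (cases "x = 0")
  case False
  have "x ^ card (UNIV :: 'a set) = x ^ (card (UNIV :: 'a set) - 1) * x"
    using finite_UNIV_card_ge_0[where 'a = 'a] by (simp flip: power_Suc2)
  with power_card_minus_one_eq_one[OF False] show ?thesis
    by simp
qed (simp add: zero_power finite_UNIV_card_ge_0)

lemma
  fixes g :: "'a::field"
  assumes "0 < m" and "g ^ m = 1"
  shows mult_order_pos: "0 < mult_order g"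
    and power_mult_order: "g ^ mult_order g = 1"
  using LeastI[of "\<lambda>n. 0 < n \<and> g ^ n = 1" m] assms unfolding mult_order_def by auto

lemma power_neq_one_below_mult_order:
  "0 < n \<Longrightarrow> n < mult_order g \<Longrightarrow> g ^ n \<noteq> 1"
  unfolding mult_order_def using not_less_Least by blast

lemma power_mod_mult_order:
  fixes g :: "'a::field"
  assumes "0 < m" and "g ^ m = 1"
  shows "g ^ (n mod mult_order g) = g ^ n"
proof -
  have "g ^ n = (g ^ mult_order g) ^ (n div mult_order g) * g ^ (n mod mult_order g)"
    by (simp only: power_mult[symmetric] power_add[symmetric] mult_div_mod_eq)
  then show ?thesis
    using power_mult_order[OF assms] by simp
qed

lemma inj_on_power_mult_order:
  fixes g :: "'a::field"
  assumes "0 < m" and "g ^ m = 1"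
  shows "inj_on (\<lambda>i. g ^ i) {..<mult_order g}"
proof -
  have "g \<noteq> 0"
    using assms by (auto simp: zero_power)
  have "g ^ i \<noteq> g ^ j" if "i < j" "j < mult_order g" for i j
  proof
    assume "g ^ i = g ^ j"
    moreover have "g ^ j = g ^ i * g ^ (j - i)"
      using that(1) by (simp flip: power_add)
    ultimately have "g ^ (j - i) = 1"
      using \<open>g \<noteq> 0\<close> by simp
    moreover have "0 < j - i" "j - i < mult_order g"
      using that by simp_all
    ultimately show False
      using power_neq_one_below_mult_order by blast
  qed
  then show ?thesis
    by (intro inj_onI) (metis lessThan_iff linorder_neqE_nat)
qed

definition power_orbit :: "'a::field \<Rightarrow> 'a \<Rightarrow> 'a set" where
  "power_orbit g x = range (\<lambda>i. g ^ i * x)"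

context
  fixes g :: "'a::field" and m :: nat
  assumes m_pos: "0 < m" and root_of_unity: "g ^ m = 1"
begin

lemma power_orbit_eq_image_lessThan:
  "power_orbit g x = (\<lambda>i. g ^ i * x) ` {..<mult_order g}"
proof -
  have "g ^ i * x \<in> (\<lambda>i. g ^ i * x) ` {..<mult_order g}" for i
  proof
    show "g ^ i * x = g ^ (i mod mult_order g) * x"
      by (simp only: power_mod_mult_order[OF m_pos root_of_unity])
    show "i mod mult_order g \<in> {..<mult_order g}"
      using mult_order_pos[OF m_pos root_of_unity] by simp
  qed
  then show ?thesis
    unfolding power_orbit_def by auto
qed

lemma card_power_orbit:
  assumes "x \<noteq> 0"
  shows "card (power_orbit g x) = mult_order g"
proof -
  have "inj_on (\<lambda>i. g ^ i * x) {..<mult_order g}"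
    using inj_on_power_mult_order[OF m_pos root_of_unity] assms
    by (simp add: inj_on_def)
  then show ?thesis
    by (simp add: power_orbit_eq_image_lessThan card_image)
qed

lemma power_orbit_eq:
  assumes "y \<in> power_orbit g x"
  shows "power_orbit g y = power_orbit g x"
proof -
  obtain i where y: "y = g ^ i * x"
    using assms unfolding power_orbit_def by blast
  have "x = g ^ ((m - 1) * i) * y"
  proof -
    have "g ^ ((m - 1) * i) * g ^ i = (g ^ m) ^ i"
      using m_pos by (simp flip: power_add power_mult add: algebra_simps)
    then show ?thesis
      using root_of_unity by (simp add: y mult.assoc[symmetric])
  qed
  have "power_orbit g y \<subseteq> power_orbit g x"
    unfolding power_orbit_def y by (auto simp: mult.assoc simp flip: power_add)
  moreover have "power_orbit g x \<subseteq> power_orbit g y"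
    unfolding power_orbit_def by (subst \<open>x = _\<close>) (auto simp: mult.assoc simp flip: power_add)
  ultimately show ?thesis
    by blast
qed

lemma funpow_eq_scaling:
  assumes "\<And>y. y \<in> X \<Longrightarrow> g * y \<in> X" and "\<And>y. y \<in> X \<Longrightarrow> f y = g * y" and "x \<in> X"
  shows "(f ^^ i) x = g ^ i * x" and "g ^ i * x \<in> X"
proof -
  have "(f ^^ i) x = g ^ i * x \<and> g ^ i * x \<in> X"
    by (induction i) (use assms in \<open>auto simp: mult.assoc\<close>)
  then show "(f ^^ i) x = g ^ i * x" and "g ^ i * x \<in> X"
    by blast+
qed

lemma is_cycle_power_orbit:
  assumes "\<And>y. y \<in> X \<Longrightarrow> g * y \<in> X" and "\<And>y. y \<in> X \<Longrightarrow> f y = g * y"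
    and "x \<in> X" and "x \<noteq> 0"
  shows "is_cycle f (mult_order g) (power_orbit g x)"
proof -
  note iterate = funpow_eq_scaling(1)[OF assms(1-3)]
  have "inj_on (\<lambda>i. (f ^^ i) x) {..<mult_order g}"
    using inj_on_power_mult_order[OF m_pos root_of_unity] \<open>x \<noteq> 0\<close>
    by (simp add: iterate inj_on_def)
  moreover have "(f ^^ mult_order g) x = x"
    by (simp add: iterate power_mult_order[OF m_pos root_of_unity])
  moreover have "power_orbit g x = (\<lambda>i. (f ^^ i) x) ` {..<mult_order g}"
    by (simp add: iterate power_orbit_eq_image_lessThan)
  ultimately show ?thesis
    unfolding is_cycle_def using mult_order_pos[OF m_pos root_of_unity] by blast
qed

lemma cycle_decomposition_of_scaling:
  assumes "finite X" and "0 \<notin> X"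
    and "\<And>y. y \<in> X \<Longrightarrow> g * y \<in> X" and "\<And>y. y \<in> X \<Longrightarrow> f y = g * y"
  shows "\<exists>S. finite S \<and> (\<forall>C \<in> S. is_cycle f (mult_order g) C) \<and> \<Union>S = X
           \<and> card S = card X div mult_order g"
proof (intro exI conjI)
  let ?S = "power_orbit g ` X"
  show "finite ?S"
    using assms(1) by simp
  show "\<forall>C \<in> ?S. is_cycle f (mult_order g) C"
  proof
    fix C assume "C \<in> ?S"
    then obtain x where x: "x \<in> X" "C = power_orbit g x"
      by blast
    with assms(2) have "x \<noteq> 0"
      by blast
    have "is_cycle f (mult_order g) (power_orbit g x)"
      by (rule is_cycle_power_orbit[of X f x]) (fact assms(3) assms(4) x(1) \<open>x \<noteq> 0\<close>)+
    then show "is_cycle f (mult_order g) C"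
      unfolding x(2) .
  qed
  have "power_orbit g x \<subseteq> X" if "x \<in> X" for x
    using funpow_eq_scaling(2)[OF assms(3,4) that] unfolding power_orbit_def by blast
  moreover have "x \<in> power_orbit g x" for x
    unfolding power_orbit_def by (rule range_eqI[of _ _ 0]) simp
  ultimately show union: "\<Union>?S = X"
    by blast
  have "mult_order g * card ?S = card (\<Union>?S)"
  proof (rule card_partition)
    show "finite ?S" "finite (\<Union>?S)"
      using assms(1) union by simp_all
    show "card C = mult_order g" if C: "C \<in> ?S" for C
    proof -
      obtain x where "x \<in> X" "C = power_orbit g x"
        using C by blast
      with assms(2) show ?thesis
        by (metis card_power_orbit)
    qed
    show "C \<inter> D = {}" if CD: "C \<in> ?S" "D \<in> ?S" "C \<noteq> D" for C D
    proof (rule ccontr)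
      assume "C \<inter> D \<noteq> {}"
      then obtain y where "y \<in> C" "y \<in> D"
        by blast
      obtain x x' where "C = power_orbit g x" "D = power_orbit g x'"
        using CD(1,2) by blast
      with \<open>y \<in> C\<close> \<open>y \<in> D\<close> have "C = power_orbit g y" "D = power_orbit g y"
        using power_orbit_eq[of y x] power_orbit_eq[of y x'] by simp_all
      with CD(3) show False
        by simp
    qed
  qed
  with union show "card ?S = card X div mult_order g"
    using mult_order_pos[OF m_pos root_of_unity] by (metis nonzero_mult_div_cancel_left not_gr0)
qed

end

locale quadratic_extension =
  fixes q :: nat and a \<beta> :: "'a::{finite,field}"
  assumes prime_power_q: "prime_power q" and odd_q: "odd q"
    and card_field: "card (UNIV :: 'a set) = q ^ 2"
    and a_in_subfield: "a \<in> subfield_q q"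
    and a_nonsquare: "\<not> (\<exists>z \<in> subfield_q q. z ^ 2 = a)"
    and beta_squared: "\<beta> ^ 2 = a"
begin

abbreviation Fq :: "'a set" where
  "Fq \<equiv> subfield_q q"

lemma CHAR_prime: "prime CHAR('a)"
  by (rule prime_CHAR_semidom) (simp add: finite_imp_CHAR_pos)

lemma q_eq_CHAR_power: "\<exists>k. 0 < k \<and> q = CHAR('a) ^ k"
proof -
  obtain p k where p: "prime p" "0 < k" "q = p ^ k"
    using prime_power_q unfolding prime_power_def by blast
  have "CHAR('a) dvd (p ^ k) ^ 2"
    using CHAR_dvd_CARD[where 'a = 'a] card_field p(3) by simp
  then have "CHAR('a) = p"
    using CHAR_prime p(1) prime_dvd_power primes_dvd_imp_eq by metis
  with p show ?thesis
    by blast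
qed

lemma one_less_q: "1 < q"
  using q_eq_CHAR_power CHAR_prime by (metis one_less_power prime_gt_1_nat)

lemma two_neq_zero: "(2::'a) \<noteq> 0"
proof
  assume "(2::'a) = 0"
  then have "CHAR('a) = 2"
    using CHAR_prime of_nat_eq_0_iff_char_dvd[of 2, where 'a = 'a]
    by (simp add: primes_dvd_imp_eq)
  then show False
    using q_eq_CHAR_power odd_q by auto
qed

lemma frobenius_add: "(x + y :: 'a) ^ q = x ^ q + y ^ q"
  using q_eq_CHAR_power CHAR_prime freshmans_dream' by blast

lemma frobenius_uminus: "(- x :: 'a) ^ q = - (x ^ q)"
proof -
  have "x ^ q + (- x) ^ q = 0"
    using frobenius_add[of x "- x"] one_less_q by (simp add: zero_power)
  then show ?thesis
    by (metis neg_eq_iff_add_eq_0)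
qed

lemma frobenius_diff: "(x - y :: 'a) ^ q = x ^ q - y ^ q"
  using frobenius_add[of x "- y"] by (simp add: frobenius_uminus)

lemma frobenius_frobenius: "((x::'a) ^ q) ^ q = x"
  using power_card_eq_self[of x] card_field by (simp flip: power_mult add: power2_eq_square)

lemma subfield_add: "x \<in> Fq \<Longrightarrow> y \<in> Fq \<Longrightarrow> x + y \<in> Fq"
  by (simp add: subfield_q_def frobenius_add)

lemma subfield_diff: "x \<in> Fq \<Longrightarrow> y \<in> Fq \<Longrightarrow> x - y \<in> Fq"
  by (simp add: subfield_q_def frobenius_diff)

lemma subfield_uminus: "x \<in> Fq \<Longrightarrow> - x \<in> Fq"
  by (simp add: subfield_q_def frobenius_uminus)

lemma subfield_mult: "x \<in> Fq \<Longrightarrow> y \<in> Fq \<Longrightarrow> x * y \<in> Fq"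
  by (simp add: subfield_q_def power_mult_distrib)

lemma subfield_divide: "x \<in> Fq \<Longrightarrow> y \<in> Fq \<Longrightarrow> x / y \<in> Fq"
  by (simp add: subfield_q_def power_divide)

lemma subfield_power:
  assumes "x \<in> Fq"
  shows "x ^ n \<in> Fq"
proof -
  have "(x ^ n) ^ q = (x ^ q) ^ n"
    by (simp add: mult.commute flip: power_mult)
  with assms show ?thesis
    by (simp add: subfield_q_def)
qed

lemma subfield_numerals: "0 \<in> Fq" "1 \<in> Fq" "2 \<in> Fq"
  using one_less_q subfield_add[of 1 1] by (simp_all add: subfield_q_def)

lemma power_q_minus_one_eq_one:
  assumes "x \<in> Fq" and "x \<noteq> 0"
  shows "x ^ (q - 1) = 1"
proof -
  have "x ^ (q - 1) * x = x * 1"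
    using assms(1) one_less_q by (simp add: subfield_q_def flip: power_Suc2)
  with assms(2) show ?thesis
    by simp
qed

lemma beta_notin_subfield: "\<beta> \<notin> Fq"
  using a_nonsquare beta_squared by blast

lemma frobenius_beta: "\<beta> ^ q = - \<beta>"
proof -
  have "(\<beta> ^ q) ^ 2 = (\<beta> ^ 2) ^ q"
    by (simp add: mult.commute flip: power_mult)
  also have "\<dots> = \<beta> ^ 2"
    using a_in_subfield beta_squared by (simp add: subfield_q_def)
  finally have "(\<beta> ^ q - \<beta>) * (\<beta> ^ q + \<beta>) = 0"
    by (simp add: algebra_simps power2_eq_square)
  moreover have "\<beta> ^ q \<noteq> \<beta>"
    using beta_notin_subfield by (simp add: subfield_q_def)
  ultimately show ?thesis
    by (simp add: eq_neg_iff_add_eq_0)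
qed

lemma frobenius_conjugate:
  assumes "u \<in> Fq" and "v \<in> Fq"
  shows "(u + v * \<beta>) ^ q = u - v * \<beta>"
  using assms by (simp add: frobenius_add power_mult_distrib frobenius_beta subfield_q_def)

lemma coordinates_unique:
  assumes "s \<in> Fq" "t \<in> Fq" "s' \<in> Fq" "t' \<in> Fq" and "s + t * \<beta> = s' + t' * \<beta>"
  shows "s = s'" and "t = t'"
proof -
  show "t = t'"
  proof (rule ccontr)
    assume "t \<noteq> t'"
    with assms(5) have "\<beta> = (s' - s) / (t - t')"
      by (simp add: field_simps)
    then show False
      using beta_notin_subfield subfield_divide subfield_diff assms(1-4) by metis
  qed
  with assms(5) show "s = s'"
    by simp
qed

lemma coordinates_exist:
  "\<exists>s \<in> Fq. \<exists>t \<in> Fq. x = s + t * \<beta>"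
proof (intro bexI)
  have "\<beta> \<noteq> 0"
    using beta_notin_subfield subfield_numerals by auto
  then have "(x - x ^ q) / (2 * \<beta>) * \<beta> = (x - x ^ q) / 2"
    by simp
  then show "x = (x + x ^ q) / 2 + (x - x ^ q) / (2 * \<beta>) * \<beta>"
    using two_neq_zero by (simp add: field_simps)
  have two: "2 ^ q = (2::'a)"
    using subfield_numerals by (simp add: subfield_q_def)
  have "((x + x ^ q) / 2) ^ q = (x + x ^ q) / 2"
    by (simp add: power_divide frobenius_add frobenius_frobenius two add.commute)
  then show "(x + x ^ q) / 2 \<in> Fq"
    by (simp add: subfield_q_def)
  have "((x - x ^ q) / (2 * \<beta>)) ^ q = (x ^ q - x) / (2 * - \<beta>)"
    by (simp add: power_divide power_mult_distrib frobenius_diff frobenius_frobenius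
        frobenius_beta two)
  also have "\<dots> = (x - x ^ q) / (2 * \<beta>)"
    using \<open>\<beta> \<noteq> 0\<close> two_neq_zero by (simp add: field_simps)
  finally show "(x - x ^ q) / (2 * \<beta>) \<in> Fq"
    by (simp add: subfield_q_def)
qed

lemma card_subfield: "card Fq = q"
proof -
  let ?coords = "\<lambda>(s, t). s + t * \<beta>"
  have "inj_on ?coords (Fq \<times> Fq)"
  proof (rule inj_onI, clarify)
    fix s t s' t'
    assume "s \<in> Fq" "t \<in> Fq" "s' \<in> Fq" "t' \<in> Fq" "s + t * \<beta> = s' + t' * \<beta>"
    then show "s = s' \<and> t = t'"
      using coordinates_unique by blast
  qed
  moreover have "x \<in> ?coords ` (Fq \<times> Fq)" for x
  proof -
    obtain s t where "s \<in> Fq" "t \<in> Fq" "x = s + t * \<beta>"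
      using coordinates_exist by blast
    then show ?thesis
      by (intro rev_image_eqI[of "(s, t)"]) simp_all
  qed
  ultimately have "card (Fq \<times> Fq) = card (UNIV :: 'a set)"
    by (metis card_image subsetI subset_antisym top_greatest)
  then have "card Fq ^ 2 = q ^ 2"
    using card_field by (simp add: card_cartesian_product power2_eq_square)
  then show ?thesis
    by (simp add: power_eq_iff_eq_base)
qed

lemma coordinates_zero:
  assumes "s \<in> Fq" and "t \<in> Fq" and "s + t * \<beta> = 0"
  shows "s = 0" and "t = 0"
  using coordinates_unique[of s t 0 0] assms subfield_numerals(1) by simp_all

lemma norm_eq: "(u + v * \<beta>) * (u - v * \<beta>) = u ^ 2 - v ^ 2 * a"
  using beta_squared by (simp add: algebra_simps power2_eq_square)

lemma gfun_in_subfield: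
  assumes "c \<in> Fq" and "u \<in> Fq" and "v \<in> Fq"
  shows "gfun c a u v \<in> Fq"
  unfolding gfun_def
  by (intro subfield_divide subfield_diff subfield_mult subfield_power subfield_add
      subfield_numerals assms a_in_subfield)

context
  fixes u v :: 'a
  assumes u_in: "u \<in> Fq" and v_in: "v \<in> Fq" and uv_nonzero: "(u, v) \<noteq> (0, 0)"
begin

lemma line_point_nonzero: "u + v * \<beta> \<noteq> 0"
  using coordinates_zero[OF u_in v_in] uv_nonzero by auto

lemma conjugate_nonzero: "u - v * \<beta> \<noteq> 0"
proof
  assume "u - v * \<beta> = 0"
  then have "u + (- v) * \<beta> = 0"
    by simp
  from coordinates_zero[OF u_in subfield_uminus[OF v_in] this] uv_nonzero show False
    by simp
qed

lemma fmap_on_line: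
  assumes c_in: "c \<in> Fq" and l_in: "l \<in> Fq"
  shows "fmap q c (l * (u + v * \<beta>)) = gfun c a u v * (l * (u + v * \<beta>))"
proof (cases "l = 0")
  case False
  define w w' where "w = u + v * \<beta>" and "w' = u - v * \<beta>"
  have nonzero: "w \<noteq> 0" "w' \<noteq> 0"
    unfolding w_def w'_def using line_point_nonzero conjugate_nonzero by auto
  have conj: "w ^ q = w'"
    unfolding w_def w'_def by (rule frobenius_conjugate[OF u_in v_in])
  then have conj': "w' ^ q = w"
    using frobenius_frobenius[of w] by simp
  have "(l * w) ^ (q - 1) * (l * w) = (l * w) ^ q"
    using one_less_q by (simp flip: power_Suc2)
  also have "\<dots> = l * w'"
    using l_in conj by (simp add: subfield_q_def power_mult_distrib)
  finally have "(l * w) ^ (q - 1) * (l * w) = l * w'" .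
  then have x: "(l * w) ^ (q - 1) = w' / w"
    using False nonzero by (simp add: field_simps)
  have "(w' / w - c) ^ (q + 1) = (w' / w - c) ^ q * (w' / w - c)"
    by simp
  also have "\<dots> = (w / w' - c) * (w' / w - c)"
    using c_in conj conj' by (simp add: frobenius_diff power_divide subfield_q_def)
  also have "\<dots> = (w - c * w') * (w' - c * w) / (w * w')"
    using nonzero by (simp add: field_simps)
  also have "\<dots> = gfun c a u v"
    unfolding gfun_def w_def w'_def norm_eq[symmetric] beta_squared[symmetric]
    by (simp add: algebra_simps power2_eq_square)
  finally have g_eq: "(w' / w - c) ^ (q + 1) = gfun c a u v" .
  have "fmap q c (l * w) = gfun c a u v * (l * w)"
    unfolding fmap_def x g_eq[symmetric] by (rule mult.commute)
  then show ?thesis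
    by (simp only: w_def)
qed (simp add: fmap_def)

lemma gfun_eq_zero_iff:
  assumes c_in: "c \<in> Fq"
  shows "gfun c a u v = 0 \<longleftrightarrow> (c = 1 \<and> v = 0) \<or> (c = -1 \<and> u = 0)"
proof
  have "u ^ 2 - v ^ 2 * a \<noteq> 0"
    using norm_eq line_point_nonzero conjugate_nonzero by (metis mult_eq_0_iff)
  moreover assume "gfun c a u v = 0"
  ultimately have numerator: "((1 - c) * u) ^ 2 = a * ((1 + c) * v) ^ 2"
    by (simp add: gfun_def power_mult_distrib mult_ac)
  show "(c = 1 \<and> v = 0) \<or> (c = -1 \<and> u = 0)"
  proof (cases "v = 0")
    case True
    with uv_nonzero numerator show ?thesis
      by simp
  next
    case False
    have "1 + c = 0"
    proof (rule ccontr)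
      assume "1 + c \<noteq> 0"
      with False have "((1 - c) * u / ((1 + c) * v)) ^ 2 = a"
        using numerator by (simp add: power_divide)
      moreover have "(1 - c) * u / ((1 + c) * v) \<in> Fq"
        by (intro subfield_divide subfield_diff subfield_mult subfield_add subfield_numerals
            c_in u_in v_in)
      ultimately show False
        using a_nonsquare by blast
    qed
    then have "c = -1"
      by (simp add: add_eq_0_iff)
    moreover have "(2 * u) ^ 2 = 0"
      using numerator \<open>c = -1\<close> by simp
    then have "u = 0"
      using two_neq_zero by (metis mult_eq_0_iff power_eq_0_iff)
    ultimately show ?thesis
      by simp
  qed
qed (auto simp: gfun_def)

lemma line_cycle_decomposition:
  assumes c_in: "c \<in> Fq" and g_nonzero: "gfun c a u v \<noteq> 0"
  shows "\<exists>S. finite S \<and> (\<forall>C \<in> S. is_cycle (fmap q c) (mult_order (gfun c a u v)) C)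
           \<and> \<Union>S = line q \<beta> u v - {0} \<and> card S = (q - 1) div mult_order (gfun c a u v)"
proof -
  define g w where "g = gfun c a u v" and "w = u + v * \<beta>"
  let ?X = "line q \<beta> u v - {0}"
  have g_in: "g \<in> Fq"
    unfolding g_def using c_in u_in v_in by (rule gfun_in_subfield)
  have X_eq: "?X = (\<lambda>l. l * w) ` (Fq - {0})"
    using line_point_nonzero unfolding line_def w_def by auto
  have "inj_on (\<lambda>l. l * w) (Fq - {0})"
    using line_point_nonzero unfolding w_def by (auto intro: inj_onI)
  then have card_X: "card ?X = q - 1"
    using card_subfield subfield_numerals X_eq by (simp add: card_image)
  have closed: "g * x \<in> ?X" if "x \<in> ?X" for x
    using that g_in g_nonzero subfield_mult unfolding X_eq g_def
    by (auto simp: mult.assoc intro!: image_eqI)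
  have scaling: "fmap q c x = g * x" if "x \<in> ?X" for x
    using that fmap_on_line[OF c_in] unfolding X_eq g_def w_def by auto
  have root: "g ^ (q - 1) = 1"
    using power_q_minus_one_eq_one g_in g_nonzero unfolding g_def by blast
  have "0 < q - 1"
    using one_less_q by simp
  moreover have "finite ?X" and "0 \<notin> ?X"
    by simp_all
  ultimately have "\<exists>S. finite S \<and> (\<forall>C \<in> S. is_cycle (fmap q c) (mult_order g) C)
           \<and> \<Union>S = ?X \<and> card S = card ?X div mult_order g"
    by (rule cycle_decomposition_of_scaling[OF _ root _ _ closed scaling])
  then show ?thesis
    unfolding card_X g_def .
qed

end

end

theorem mainTheorem5:
  fixes q :: nat and c a \<beta> :: "'a::{finite,field}"
  assumes "prime_power q" and "odd q"
    and "card (UNIV :: 'a set) = q ^ 2"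
    and "c \<in> subfield_q q" and "c \<noteq> 0"
    and "a \<in> subfield_q q" and "a \<noteq> 0"
    and "\<not> (\<exists>z \<in> subfield_q q. z ^ 2 = a)"
    and "\<beta> ^ 2 = a"
  shows "(\<forall>u \<in> subfield_q q. \<forall>v \<in> subfield_q q. (u, v) \<noteq> (0, 0) \<longrightarrow>
            (gfun c a u v = 0 \<longleftrightarrow> (c = 1 \<and> v = 0) \<or> (c = -1 \<and> u = 0)))
       \<and> (\<forall>u \<in> subfield_q q. \<forall>v \<in> subfield_q q. (u, v) \<noteq> (0, 0) \<longrightarrow>
            gfun c a u v \<noteq> 0 \<longrightarrow>
            (\<exists>S. finite S \<and> (\<forall>C \<in> S. is_cycle (fmap q c) (mult_order (gfun c a u v)) C)
                 \<and> \<Union>S = line q \<beta> u v - {0}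
                 \<and> card S = (q - 1) div mult_order (gfun c a u v)))"
proof -
  interpret quadratic_extension q a \<beta>
    using assms(1-3,6,8,9) by unfold_locales
  show ?thesis
  proof (intro conjI ballI impI)
    fix u v
    assume "u \<in> Fq" "v \<in> Fq" "(u, v) \<noteq> (0, 0)"
    then show "gfun c a u v = 0 \<longleftrightarrow> (c = 1 \<and> v = 0) \<or> (c = -1 \<and> u = 0)"
      by (rule gfun_eq_zero_iff[OF _ _ _ assms(4)])
  next
    fix u v
    assume "u \<in> Fq" "v \<in> Fq" "(u, v) \<noteq> (0, 0)" "gfun c a u v \<noteq> 0"
    then show "\<exists>S. finite S \<and> (\<forall>C \<in> S. is_cycle (fmap q c) (mult_order (gfun c a u v)) C)
        \<and> \<Union>S = line q \<beta> u v - {0} \<and> card S = (q - 1) div mult_order (gfun c a u v)"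
      by (rule line_cycle_decomposition[OF _ _ _ assms(4)])
  qed
qed

end
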